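(* Let $n\ge 3$ and $k\ge 1$. For every function $f\colon V(C_n)\to V(C_{3k})$, we have $\gamma(C_n\otimes_f C_{3k})=kn$; moreover, for every minimum dominating set $D$ of $C_n\otimes_f C_{3k}$ and every $g\in V(C_n)$, $|D\cap (\{g\}\times V(C_{3k}))|=k$.
   Context: $C_m$ is the cycle on $m$ vertices; $\gamma$ denotes the domination number. For graphs $G,H$ and a function $f\colon V(G)\to V(H)$, the Sierpiński product $G\otimes_f H$ is the graph with vertex set $V(G)\times V(H)$ and edges of two types: (type 1) $(g,h)(g,h')$ for every $g\in V(G)$ and every edge $hh'\in E(H)$; (type 2) $(g,f(g'))(g',f(g))$ for every edge $gg'\in E(G)$. *)

theory Defs
  imports Main
begin

definition cycle_adj :: "nat \<Rightarrow> nat \<Rightarrow> nat \<Rightarrow> bool" where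
  "cycle_adj m i j \<longleftrightarrow> i < m \<and> j < m \<and> (j = (i + 1) mod m \<or> i = (j + 1) mod m)"

definition cycle_verts :: "nat \<Rightarrow> nat set" where
  "cycle_verts m = {0..<m}"

definition sierp_verts :: "'a set \<Rightarrow> 'b set \<Rightarrow> ('a \<times> 'b) set" where
  "sierp_verts VG VH = VG \<times> VH"

definition sierp_adj ::
  "('a \<Rightarrow> 'a \<Rightarrow> bool) \<Rightarrow> ('b \<Rightarrow> 'b \<Rightarrow> bool) \<Rightarrow> ('a \<Rightarrow> 'b)
     \<Rightarrow> 'a \<times> 'b \<Rightarrow> 'a \<times> 'b \<Rightarrow> bool" where
  "sierp_adj adjG adjH f x y \<longleftrightarrow>
     (fst x = fst y \<and> adjH (snd x) (snd y)) \<or>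
     (adjG (fst x) (fst y) \<and> snd x = f (fst y) \<and> snd y = f (fst x))"

definition dominating_set :: "'v set \<Rightarrow> ('v \<Rightarrow> 'v \<Rightarrow> bool) \<Rightarrow> 'v set \<Rightarrow> bool" where
  "dominating_set V adj D \<longleftrightarrow> D \<subseteq> V \<and> (\<forall>v\<in>V. v \<in> D \<or> (\<exists>u\<in>D. adj u v))"

definition domination_number :: "'v set \<Rightarrow> ('v \<Rightarrow> 'v \<Rightarrow> bool) \<Rightarrow> nat" where
  "domination_number V adj = Min (card ` {D. dominating_set V adj D})"

definition min_dominating_set :: "'v set \<Rightarrow> ('v \<Rightarrow> 'v \<Rightarrow> bool) \<Rightarrow> 'v set \<Rightarrow> bool" where
  "min_dominating_set V adj D \<longleftrightarrow>
     dominating_set V adj D \<and> card D = domination_number V adj"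

end

theory Submission
  imports Defs
begin

text \<open>A vertex (g, h) of the fibre over g is dominated either inside the fibre, where each
  vertex of a dominating set covers at most three vertices of the cycle, or by a type-2 edge from
  a neighbour a of g, which only reaches (g, f a). Since g has at most two neighbours in C_n, a
  dominating set meets every fibre of C_n \<otimes>_f C_3k in at least \<lceil>(3k - 2)/3\<rceil> = k
  vertices; hence it has at least kn vertices. Choosing the vertices h \<equiv> 1 (mod 3) in every
  fibre attains this bound, so in a minimum dominating set every fibre has exactly k vertices.\<close>

lemma cycle_adj_neighbours:
  assumes "cycle_adj m i j"
  shows "j = (i + 1) mod m \<or> j = (i + m - 1) mod m"
proof -
  have "i < m" "j < m" and "j = (i + 1) mod m \<or> i = (j + 1) mod m"
    using assms unfolding cycle_adj_def by auto
  then show ?thesis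
    by (cases "j + 1 < m") (auto simp: mod_if)
qed

lemma finite_dominating_set_cards:
  assumes "finite V"
  shows "finite (card ` {D. dominating_set V adj D})"
proof -
  have "{D. dominating_set V adj D} \<subseteq> Pow V"
    unfolding dominating_set_def by auto
  then show ?thesis
    using assms by (meson finite_Pow_iff finite_imageI finite_subset)
qed

lemma domination_number_eqI:
  assumes "finite V" and "dominating_set V adj D" and "card D = b"
    and "\<And>D. dominating_set V adj D \<Longrightarrow> b \<le> card D"
  shows "domination_number V adj = b"
proof -
  have fin: "finite (card ` {D. dominating_set V adj D})"
    using assms(1) by (rule finite_dominating_set_cards)
  have "domination_number V adj \<in> card ` {D. dominating_set V adj D}"
    unfolding domination_number_def using fin assms(2) by (intro Min_in) auto
  then have "b \<le> domination_number V adj"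
    using assms(4) by auto
  moreover have "domination_number V adj \<le> b"
    unfolding domination_number_def using fin assms(2,3) by (intro Min_le) auto
  ultimately show ?thesis by simp
qed

lemma dominating_set_sierp_product:
  assumes "dominating_set VH adjH S"
  shows "dominating_set (VG \<times> VH) (sierp_adj adjG adjH f) (VG \<times> S)"
  using assms unfolding dominating_set_def sierp_adj_def by fastforce

lemma dominating_set_cycle_residues:
  "dominating_set {0..<3 * k} (cycle_adj (3 * k)) {h. h < 3 * k \<and> h mod 3 = 1}"
  unfolding dominating_set_def
proof (intro conjI ballI)
  fix h assume "h \<in> {0..<3 * k}"
  then have h: "h < 3 * k" by simp
  define q where "q = h div 3"
  have q: "h = 3 * q + h mod 3"
    unfolding q_def by simp
  consider "h mod 3 = 1" | "h mod 3 = 0" | "h mod 3 = 2" by linarith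
  then show "h \<in> {h. h < 3 * k \<and> h mod 3 = 1} \<or>
      (\<exists>u\<in>{h. h < 3 * k \<and> h mod 3 = 1}. cycle_adj (3 * k) u h)"
  proof cases
    case 2
    then have "h = 3 * q" using q by simp
    then have "h + 1 < 3 * k" "(h + 1) mod 3 = 1" using h by auto
    moreover have "cycle_adj (3 * k) (h + 1) h"
      using \<open>h + 1 < 3 * k\<close> unfolding cycle_adj_def by simp
    ultimately show ?thesis by blast
  next
    case 3
    then have "h = 3 * q + 2" using q by simp
    then have "1 \<le> h" "(h - 1) mod 3 = 1" by auto
    moreover have "cycle_adj (3 * k) (h - 1) h"
      using \<open>1 \<le> h\<close> h unfolding cycle_adj_def by simp
    ultimately show ?thesis using h by auto
  qed (use h in simp)
qed auto
lemma card_residues_1_mod_3: "card {h::nat. h < 3 * k \<and> h mod 3 = 1} = k"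
proof -
  have "{h::nat. h < 3 * k \<and> h mod 3 = 1} = (\<lambda>q. 3 * q + 1) ` {0..<k}"
  proof (intro set_eqI iffI)
    fix h assume "h \<in> {h::nat. h < 3 * k \<and> h mod 3 = 1}"
    then have "h < 3 * k" and "h = 3 * (h div 3) + 1"
      using div_mult_mod_eq[of h 3] by auto
    then show "h \<in> (\<lambda>q. 3 * q + 1) ` {0..<k}"
      by (intro rev_image_eqI[of "h div 3"]) auto
  qed auto
  moreover have "inj_on (\<lambda>q::nat. 3 * q + 1) {0..<k}"
    by (auto simp: inj_on_def)
  ultimately show ?thesis by (simp add: card_image)
qed

lemma sierp_cycle_fibre_covered:
  assumes "dominating_set (VG \<times> {0..<m}) (sierp_adj adjG (cycle_adj m) f) D" and "g \<in> VG"
  shows "{0..<m} \<subseteq>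
    (\<Union>s\<in>snd ` (D \<inter> ({g} \<times> {0..<m})). {s, (s + 1) mod m, (s + m - 1) mod m})
      \<union> f ` {a. adjG a g}"
proof
  fix h assume h: "h \<in> {0..<m}"
  then have "(g, h) \<in> D \<or> (\<exists>u\<in>D. sierp_adj adjG (cycle_adj m) f u (g, h))"
    using assms unfolding dominating_set_def by blast
  then show "h \<in> (\<Union>s\<in>snd ` (D \<inter> ({g} \<times> {0..<m})). {s, (s + 1) mod m, (s + m - 1) mod m})
      \<union> f ` {a. adjG a g}"
  proof
    assume "(g, h) \<in> D"
    then show ?thesis using h by force
  next
    assume "\<exists>u\<in>D. sierp_adj adjG (cycle_adj m) f u (g, h)"
    then obtain a b where ab: "(a, b) \<in> D"
      and "(a = g \<and> cycle_adj m b h) \<or> (adjG a g \<and> b = f g \<and> h = f a)"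
      unfolding sierp_adj_def by auto
    then consider "a = g" "cycle_adj m b h" | "adjG a g" "h = f a" by blast
    then show ?thesis
    proof cases
      case 1
      then have "b < m" using cycle_adj_def by blast
      then have "b \<in> snd ` (D \<inter> ({g} \<times> {0..<m}))" using ab 1(1) by force
      then show ?thesis using cycle_adj_neighbours[OF 1(2)] by blast
    qed auto
  qed
qed

lemma sierp_cycle_fibre_card_ge:
  assumes "dominating_set (VG \<times> {0..<m}) (sierp_adj adjG (cycle_adj m) f) D" and "g \<in> VG"
    and "finite {a. adjG a g}"
  shows "m \<le> 3 * card (D \<inter> ({g} \<times> {0..<m})) + card {a. adjG a g}"
proof -
  let ?F = "D \<inter> ({g} \<times> {0..<m})"
  let ?T = "\<lambda>s. {s, (s + 1) mod m, (s + m - 1) mod m}"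
  have fin: "finite (snd ` ?F)"
    by (rule finite_subset[of _ "{0..<m}"]) auto
  have "m \<le> card ((\<Union>s\<in>snd ` ?F. ?T s) \<union> f ` {a. adjG a g})"
    using card_mono[OF _ sierp_cycle_fibre_covered[OF assms(1,2)]] fin assms(3) by simp
  also have "\<dots> \<le> card (\<Union>s\<in>snd ` ?F. ?T s) + card (f ` {a. adjG a g})"
    by (rule card_Un_le)
  also have "\<dots> \<le> (\<Sum>s\<in>snd ` ?F. card (?T s)) + card {a. adjG a g}"
    by (intro add_mono card_UN_le[OF fin] card_image_le[OF assms(3)])
  also have "\<dots> \<le> (\<Sum>s\<in>snd ` ?F. 3) + card {a. adjG a g}"
    by (intro add_mono sum_mono) (auto simp: card_insert_if)
  also have "\<dots> \<le> 3 * card ?F + card {a. adjG a g}"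
    using card_image_le[of ?F snd] by simp
  finally show ?thesis .
qed

lemma card_cycle_neighbours_le_2: "card {a. cycle_adj n a g} \<le> 2"
proof -
  have "{a. cycle_adj n a g} \<subseteq> {(g + 1) mod n, (g + n - 1) mod n}"
  proof
    fix a assume "a \<in> {a. cycle_adj n a g}"
    then have "cycle_adj n g a" by (auto simp: cycle_adj_def)
    then show "a \<in> {(g + 1) mod n, (g + n - 1) mod n}" using cycle_adj_neighbours by blast
  qed
  then have "card {a. cycle_adj n a g} \<le> card {(g + 1) mod n, (g + n - 1) mod n}"
    by (intro card_mono) auto
  also have "\<dots> \<le> 2" by (simp add: card_insert_if)
  finally show ?thesis .
qed

lemma sierp_cycles_fibre_card_ge:
  assumes "dominating_set ({0..<n} \<times> {0..<3 * k}) (sierp_adj (cycle_adj n) (cycle_adj (3 * k)) f) D"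
    and "g < n"
  shows "k \<le> card (D \<inter> ({g} \<times> {0..<3 * k}))"
proof -
  have "finite {a. cycle_adj n a g}"
    by (rule finite_subset[of _ "{0..<n}"]) (auto simp: cycle_adj_def)
  then have "3 * k \<le> 3 * card (D \<inter> ({g} \<times> {0..<3 * k})) + card {a. cycle_adj n a g}"
    using sierp_cycle_fibre_card_ge[OF assms(1)] assms(2) by simp
  then have "3 * k \<le> 3 * card (D \<inter> ({g} \<times> {0..<3 * k})) + 2"
    using card_cycle_neighbours_le_2[of n g] by linarith
  then show ?thesis by linarith
qed

lemma card_eq_sum_fibres:
  assumes "D \<subseteq> A \<times> B" and "finite A" and "finite B"
  shows "card D = (\<Sum>g\<in>A. card (D \<inter> ({g} \<times> B)))"
proof -
  have "D = (\<Union>g\<in>A. D \<inter> ({g} \<times> B))" using assms(1) by auto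
  then have "card D = card (\<Union>g\<in>A. D \<inter> ({g} \<times> B))" by simp
  also have "\<dots> = (\<Sum>g\<in>A. card (D \<inter> ({g} \<times> B)))"
    using assms by (intro card_UN_disjoint) (auto intro: rev_finite_subset[of "A \<times> B"])
  finally show ?thesis .
qed

lemma sum_eq_lower_bound_imp_eq:
  fixes h :: "'a \<Rightarrow> nat"
  assumes "finite A" and "\<And>x. x \<in> A \<Longrightarrow> k \<le> h x" and "sum h A \<le> card A * k" and "x \<in> A"
  shows "h x = k"
proof (rule ccontr)
  assume "h x \<noteq> k"
  then have "(\<Sum>_\<in>A. k) < sum h A"
    using assms by (intro sum_strict_mono_ex1) (auto simp: order.order_iff_strict)
  then show False using assms(3) by (simp add: mult.commute)
qed

theorem mainTheorem11:
  fixes n k :: nat and f :: "nat \<Rightarrow> nat"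
  assumes "n \<ge> 3" and "k \<ge> 1"
    and "\<forall>g\<in>cycle_verts n. f g \<in> cycle_verts (3 * k)"
  shows "domination_number (sierp_verts (cycle_verts n) (cycle_verts (3 * k)))
           (sierp_adj (cycle_adj n) (cycle_adj (3 * k)) f) = k * n
       \<and> (\<forall>D. min_dominating_set (sierp_verts (cycle_verts n) (cycle_verts (3 * k)))
               (sierp_adj (cycle_adj n) (cycle_adj (3 * k)) f) D \<longrightarrow>
             (\<forall>g\<in>cycle_verts n. card (D \<inter> ({g} \<times> cycle_verts (3 * k))) = k))"
proof -
  let ?V = "{0..<n} \<times> {0..<3 * k}" and ?adj = "sierp_adj (cycle_adj n) (cycle_adj (3 * k)) f"
  have card_fibres: "card D = (\<Sum>g\<in>{0..<n}. card (D \<inter> ({g} \<times> {0..<3 * k})))"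
    if "dominating_set ?V ?adj D" for D
    using that unfolding dominating_set_def by (intro card_eq_sum_fibres) auto
  have lower: "k * n \<le> card D" if D: "dominating_set ?V ?adj D" for D
    using sum_mono[of "{0..<n}" "\<lambda>_. k"] sierp_cycles_fibre_card_ge[OF D] card_fibres[OF D]
    by (simp add: mult.commute)
  have "dominating_set ?V ?adj ({0..<n} \<times> {h. h < 3 * k \<and> h mod 3 = 1})"
    by (rule dominating_set_sierp_product[OF dominating_set_cycle_residues])
  then have \<gamma>: "domination_number ?V ?adj = k * n"
    using lower card_residues_1_mod_3[of k]
    by (intro domination_number_eqI) (auto simp: card_cartesian_product)
  have "card (D \<inter> ({g} \<times> {0..<3 * k})) = k"
    if "min_dominating_set ?V ?adj D" and "g < n" for D g
    using that \<gamma> sierp_cycles_fibre_card_ge card_fibres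
    by (intro sum_eq_lower_bound_imp_eq[of "{0..<n}"]) (auto simp: min_dominating_set_def)
  then show ?thesis
    using \<gamma> unfolding sierp_verts_def cycle_verts_def by auto
qed

end
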